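(* Consider the 2-Opt heuristic: start with an arbitrary tour $T$; while there exists an improving 2-change in $T$, perform an improving 2-change; output $T$. For every metric TSP instance with $n\ge 3$ cities, every tour that the 2-Opt heuristic can output (for any starting tour and any choice of improving 2-changes) has length at most $\sqrt{n/2}$ times the length of a shortest tour. Moreover, for every positive integer $k$ and $n=2k^2$ there exists a metric TSP instance with $n$ cities and a starting tour for which the 2-Opt heuristic outputs a tour of length exactly $\sqrt{n/2}$ times the length of a shortest tour (which is positive). In this sense the approximation ratio of the 2-Opt heuristic on metric TSP is $\sqrt{n/2}$, and this is tight.
   Context: A metric TSP instance with $n$ cities consists of a complete undirected graph $G$ on $n$ vertices together with a distance function $c: E(G)\to\mathbb{R}_{\ge 0}$ satisfying the triangle inequality $c(x,y)+c(y,z)\ge c(x,z)$ for all vertices $x,y,z$. A tour is a cycle in $G$ containing all vertices; its length is $c(T)=\sum_{e\in E(T)}c(e)$. Tours are regarded as oriented cycles. For two edges $(a,b)$ and $(x,y)$ of an oriented tour, the 2-change replaces them by $(a,x)$ and $(b,y)$ (reversing the segment from $b$ to $x$), yielding a tour; it is improving if $c(a,x)+c(b,y) < c(a,b)+c(x,y)$. An algorithm has approximation ratio $\alpha(n)\ge 1$ if on every instance with $n$ vertices it finds a tour of length at most $\alpha(n)$ times the length of a shortest tour. *)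

theory Defs
  imports Complex_Main
begin

text \<open>Cities are the natural numbers 0,...,n-1. The distance function c is defined on
  edges, i.e. on pairs of distinct cities.\<close>

definition metric_tsp :: "nat \<Rightarrow> (nat \<Rightarrow> nat \<Rightarrow> real) \<Rightarrow> bool" where
  "metric_tsp n c \<longleftrightarrow>
     (\<forall>x<n. \<forall>y<n. x \<noteq> y \<longrightarrow> c x y = c y x \<and> 0 \<le> c x y) \<and>
     (\<forall>x<n. \<forall>y<n. \<forall>z<n. x \<noteq> y \<and> y \<noteq> z \<and> x \<noteq> z \<longrightarrow> c x z \<le> c x y + c y z)"

definition is_tour :: "nat \<Rightarrow> nat list \<Rightarrow> bool" where
  "is_tour n T \<longleftrightarrow> distinct T \<and> set T = {..<n}"

definition tour_length :: "(nat \<Rightarrow> nat \<Rightarrow> real) \<Rightarrow> nat list \<Rightarrow> real" where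
  "tour_length c T = (\<Sum>i<length T. c (T ! i) (T ! (Suc i mod length T)))"

definition opt_length :: "nat \<Rightarrow> (nat \<Rightarrow> nat \<Rightarrow> real) \<Rightarrow> real" where
  "opt_length n c = Min (tour_length c ` {T. is_tour n T})"

text \<open>The 2-change on edges (a,b) = (T!i, T!(i+1)) and (x,y) = (T!j, T!((j+1) mod n)),
  i < j, replacing them by (a,x) and (b,y) by reversing the segment from b to x.\<close>

definition two_change :: "nat list \<Rightarrow> nat \<Rightarrow> nat \<Rightarrow> nat list" where
  "two_change T i j = take (Suc i) T @ rev (drop (Suc i) (take (Suc j) T)) @ drop (Suc j) T"

definition improving_two_change ::
    "(nat \<Rightarrow> nat \<Rightarrow> real) \<Rightarrow> nat list \<Rightarrow> nat \<Rightarrow> nat \<Rightarrow> bool" where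
  "improving_two_change c T i j \<longleftrightarrow> i < j \<and> j < length T \<and>
     (let a = T ! i; b = T ! Suc i; x = T ! j; y = T ! (Suc j mod length T)
      in c a x + c b y < c a b + c x y)"

definition two_opt_step :: "(nat \<Rightarrow> nat \<Rightarrow> real) \<Rightarrow> nat list \<Rightarrow> nat list \<Rightarrow> bool" where
  "two_opt_step c T T' \<longleftrightarrow> (\<exists>i j. improving_two_change c T i j \<and> T' = two_change T i j)"

definition two_opt_output ::
    "(nat \<Rightarrow> nat \<Rightarrow> real) \<Rightarrow> nat list \<Rightarrow> nat list \<Rightarrow> bool" where
  "two_opt_output c T0 T \<longleftrightarrow> (two_opt_step c)\<^sup>*\<^sup>* T0 T \<and> \<not> (\<exists>T'. two_opt_step c T T')"

end

theory Submission
  imports Defs "HOL-Analysis.Analysis"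
begin

text \<open>Put the cities on a circle of circumference L = OPT at their arc-length
  position along an optimal tour; by the triangle inequality every distance is at most the circle
  distance of the positions. An edge (a, b) of a 2-optimal tour T gives the point (pos a, pos b) of
  the torus of side L, and 2-optimality says exactly that the l1-balls of radius c(a, b) around these
  points are disjoint. Comparing areas gives 2 * (sum of c(e)^2) <= L^2, and Cauchy-Schwarz gives
  c(T) <= sqrt(n/2) * L.

  Split n = 2k^2 cities into 2k clusters, k on each of two sides, at distance 0
  within a cluster, 1 across the sides and 2 between different clusters of one side. The tour
  0, 1, ..., n-1 alternates sides, so has length n, and is 2-optimal because the clusters of two
  consecutive cities determine their place in it. Every tour must leave each cluster, so OPT >= 2k,
  and visiting the clusters in order attains 2k.\<close>

section \<open>Packing on the circle and on the torus\<close>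

definition circle_dist :: "real \<Rightarrow> real \<Rightarrow> real \<Rightarrow> real" where
  "circle_dist L s t = min \<bar>s - t\<bar> (L - \<bar>s - t\<bar>)"

lemma circle_dist_commute: "circle_dist L s t = circle_dist L t s"
  unfolding circle_dist_def by (simp add: abs_minus_commute)

lemma circle_dist_le_half: "circle_dist L s t \<le> L / 2"
  unfolding circle_dist_def by linarith

lemma circle_dist_nonneg: "s \<in> {0..L} \<Longrightarrow> t \<in> {0..L} \<Longrightarrow> 0 \<le> circle_dist L s t"
  unfolding circle_dist_def by auto

lemma circle_dist_triangle:
  "s \<in> {0..L} \<Longrightarrow> t \<in> {0..L} \<Longrightarrow> u \<in> {0..L} \<Longrightarrow>
   circle_dist L s u \<le> circle_dist L s t + circle_dist L t u"
  unfolding circle_dist_def by (auto simp: min_def abs_if split: if_splits)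

lemma sorted_circle_packing_bound:
  fixes x h :: "nat \<Rightarrow> real"
  assumes sorted: "\<And>i j. i \<le> j \<Longrightarrow> j \<le> Suc k \<Longrightarrow> x i \<le> x j"
    and separated: "\<And>i j. i \<le> Suc k \<Longrightarrow> j \<le> Suc k \<Longrightarrow> i \<noteq> j \<Longrightarrow>
      h i + h j \<le> circle_dist L (x i) (x j)"
  shows "2 * (\<Sum>i<Suc (Suc k). h i) \<le> L"
proof -
  have gap: "h i + h (Suc i) \<le> x (Suc i) - x i" if "i < Suc k" for i
    using separated[of i "Suc i"] sorted[of i "Suc i"] that by (simp add: circle_dist_def)
  have wrap: "h (Suc k) + h 0 \<le> L - (x (Suc k) - x 0)"
    using separated[of "Suc k" 0] sorted[of 0 "Suc k"] by (simp add: circle_dist_def)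
  have "(\<Sum>i<Suc k. h i + h (Suc i)) \<le> (\<Sum>i<Suc k. x (Suc i) - x i)"
    using gap by (intro sum_mono) auto
  also have "\<dots> = x (Suc k) - x 0"
    by (rule sum_lessThan_telescope)
  finally have "(\<Sum>i<Suc k. h i + h (Suc i)) \<le> x (Suc k) - x 0" .
  moreover have "(\<Sum>i<Suc (Suc k). h i) = (\<Sum>i<Suc k. h i) + h (Suc k)"
    and "(\<Sum>i<Suc (Suc k). h i) = h 0 + (\<Sum>i<Suc k. h (Suc i))"
    by (rule sum.lessThan_Suc, rule sum.lessThan_Suc_shift)
  ultimately show ?thesis
    using wrap by (simp add: sum.distrib)
qed

lemma circle_packing_bound:
  fixes E :: "'a set" and A h :: "'a \<Rightarrow> real"
  assumes "finite E" and "0 \<le> L"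
    and h: "\<And>e. e \<in> E \<Longrightarrow> 0 \<le> h e \<and> h e \<le> L / 2"
    and separated: "\<And>e f. e \<in> E \<Longrightarrow> f \<in> E \<Longrightarrow> e \<noteq> f \<Longrightarrow> 0 < h e \<Longrightarrow> 0 < h f \<Longrightarrow>
      h e + h f \<le> circle_dist L (A e) (A f)"
  shows "2 * (\<Sum>e\<in>E. h e) \<le> L"
proof -
  define E' where "E' = {e\<in>E. 0 < h e}"
  have "finite E'"
    using \<open>finite E\<close> by (simp add: E'_def)
  then obtain xs0 where "distinct xs0" "set xs0 = E'"
    using finite_distinct_list by blast
  define xs where "xs = sort_key A xs0"
  have xs: "distinct xs" "set xs = E'" "sorted (map A xs)"
    using \<open>distinct xs0\<close> \<open>set xs0 = E'\<close> by (simp_all add: xs_def)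
  have in_E': "i < length xs \<Longrightarrow> xs ! i \<in> E'" for i
    using xs(2) nth_mem by blast
  have "(\<Sum>e\<in>E. h e) = (\<Sum>e\<in>E'. h e)"
    unfolding E'_def
    by (rule sum.mono_neutral_right) (use \<open>finite E\<close> h in \<open>auto simp: order.order_iff_strict\<close>)
  also have "\<dots> = sum_list (map h xs)"
    using xs(1,2) by (simp add: sum_list_distinct_conv_sum_set)
  also have "\<dots> = (\<Sum>i<length xs. h (xs ! i))"
    by (simp add: sum_list_sum_nth atLeast0LessThan)
  finally have sum_eq: "(\<Sum>e\<in>E. h e) = (\<Sum>i<length xs. h (xs ! i))" .
  consider "length xs = 0" | "length xs = 1" | k where "length xs = Suc (Suc k)"
    by (metis One_nat_def not0_implies_Suc)
  then show ?thesis
  proof cases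
    case 1
    then show ?thesis using sum_eq \<open>0 \<le> L\<close> by simp
  next
    case 2
    then show ?thesis using sum_eq h[of "xs ! 0"] in_E'[of 0] by (simp add: E'_def)
  next
    case 3
    have "2 * (\<Sum>i<Suc (Suc k). h (xs ! i)) \<le> L"
    proof (rule sorted_circle_packing_bound)
      fix i j assume "i \<le> j" "j \<le> Suc k"
      then show "A (xs ! i) \<le> A (xs ! j)"
        using sorted_nth_mono[OF xs(3), of i j] 3 by simp
    next
      fix i j assume "i \<le> Suc k" "j \<le> Suc k" "i \<noteq> j"
      then show "h (xs ! i) + h (xs ! j) \<le> circle_dist L (A (xs ! i)) (A (xs ! j))"
        using separated in_E' xs(1) 3 by (simp add: E'_def nth_eq_iff_index_eq)
    qed
    then show ?thesis
      using sum_eq 3 by simp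
  qed
qed

definition tent :: "real \<Rightarrow> real \<Rightarrow> real" where
  "tent r y = max 0 (r - \<bar>y\<bar>)"

definition tent_primitive :: "real \<Rightarrow> real \<Rightarrow> real" where
  "tent_primitive r y = (let z = max (- r) (min r y) in r * z + r\<^sup>2 / 2 - z * \<bar>z\<bar> / 2)"

lemma continuous_on_tent_primitive: "continuous_on S (tent_primitive r)"
  unfolding tent_primitive_def Let_def by (intro continuous_intros) auto

lemma tent_primitive_deriv:
  assumes "0 \<le> r" and "y \<notin> {-r, 0, r}"
  shows "(tent_primitive r has_field_derivative tent r y) (at y)"
proof (cases "r = 0")
  case True
  then have "tent_primitive r = (\<lambda>_. 0)"
    by (auto simp: tent_primitive_def Let_def fun_eq_iff)
  then show ?thesis using True by (simp add: tent_def)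
next
  case False
  with assms consider "y < -r" | "-r < y \<and> y < 0" | "0 < y \<and> y < r" | "r < y"
    by force
  then show ?thesis
  proof cases
    case 1
    have "((\<lambda>_. 0) has_field_derivative 0) (at y)" by simp
    then show ?thesis
      by (rule has_field_derivative_transform_within_open[where S="{..< -r}", THEN DERIV_cong])
         (use 1 assms in \<open>auto simp: tent_primitive_def Let_def tent_def power2_eq_square\<close>)
  next
    case 2
    have "((\<lambda>y. r * y + r\<^sup>2 / 2 + y * y / 2) has_field_derivative (r + y)) (at y)"
      by (auto intro!: derivative_eq_intros)
    then show ?thesis
      by (rule has_field_derivative_transform_within_open[where S="{-r <..< 0}", THEN DERIV_cong])
         (use 2 in \<open>auto simp: tent_primitive_def Let_def tent_def\<close>)
  next
    case 3
    have "((\<lambda>y. r * y + r\<^sup>2 / 2 - y * y / 2) has_field_derivative (r - y)) (at y)"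
      by (auto intro!: derivative_eq_intros)
    then show ?thesis
      by (rule has_field_derivative_transform_within_open[where S="{0 <..< r}", THEN DERIV_cong])
         (use 3 in \<open>auto simp: tent_primitive_def Let_def tent_def\<close>)
  next
    case 4
    have "((\<lambda>_. r\<^sup>2) has_field_derivative 0) (at y)" by simp
    then show ?thesis
      by (rule has_field_derivative_transform_within_open[where S="{r <..}", THEN DERIV_cong])
         (use 4 assms in \<open>auto simp: tent_primitive_def Let_def tent_def power2_eq_square\<close>)
  qed
qed

text \<open>The tent of radius r around b, wrapped around the circle [0, L]; three translates
  suffice since 2 r \<le> L.\<close>

definition periodic_tent :: "real \<Rightarrow> real \<Rightarrow> real \<Rightarrow> real \<Rightarrow> real" where
  "periodic_tent L r b t = tent r (t - b + L) + tent r (t - b) + tent r (t - b - L)"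

lemma has_integral_periodic_tent:
  assumes "b \<in> {0..L}" and "0 \<le> r" "2 * r \<le> L"
  shows "(periodic_tent L r b has_integral r\<^sup>2) {0..L}"
proof -
  define G where
    "G t = tent_primitive r (t - b + L) + tent_primitive r (t - b) + tent_primitive r (t - b - L)" for t
  define S where "S = (\<lambda>(c, d). c + d) ` ({b - L, b, b + L} \<times> {-r, 0, r})"
  have "(periodic_tent L r b has_integral (G L - G 0)) {0..L}"
  proof (rule fundamental_theorem_of_calculus_interior_strong)
    show "finite S" "0 \<le> L" using assms by (simp_all add: S_def)
    show "continuous_on {0..L} G" unfolding G_def
      by (intro continuous_intros continuous_on_compose2[OF continuous_on_tent_primitive]) auto
    fix x assume x: "x \<in> {0<..<L} - S"
    have shifted: "((\<lambda>t. tent_primitive r (t + a)) has_field_derivative tent r (x + a)) (at x)"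
      if "x + a \<notin> {-r, 0, r}" for a
      using tent_primitive_deriv[OF \<open>0 \<le> r\<close> that] DERIV_shift by blast
    have "x + (- b + L) \<notin> {-r, 0, r}" "x + (- b) \<notin> {-r, 0, r}" "x + (- b - L) \<notin> {-r, 0, r}"
      using x by (force simp: S_def)+
    from DERIV_add[OF DERIV_add[OF shifted[OF this(1)] shifted[OF this(2)]] shifted[OF this(3)]]
    have "(G has_field_derivative periodic_tent L r b x) (at x)"
      unfolding G_def periodic_tent_def by (simp add: algebra_simps)
    then show "(G has_vector_derivative periodic_tent L r b x) (at x)"
      by (simp add: has_real_derivative_iff_has_vector_derivative)
  qed
  moreover have "tent_primitive r (L - b + L) = r\<^sup>2" "tent_primitive r (0 - b - L) = 0"
    using assms by (simp_all add: tent_primitive_def Let_def power2_eq_square)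
  then have "G L - G 0 = r\<^sup>2"
    by (simp add: G_def)
  ultimately show ?thesis by simp
qed

lemma periodic_tent_le:
  assumes "t \<in> {0..L}" "b \<in> {0..L}" "0 \<le> r" "2 * r \<le> L"
  shows "periodic_tent L r b t \<le> max 0 (r - circle_dist L t b)"
  using assms unfolding periodic_tent_def tent_def circle_dist_def
  by (simp add: max_def min_def abs_if)

lemma integral_circle_tent_ge:
  assumes "b \<in> {0..L}" "0 \<le> r" "2 * r \<le> L"
  shows "r\<^sup>2 \<le> integral {0..L} (\<lambda>t. max 0 (r - circle_dist L t b))"
proof (rule has_integral_le[OF has_integral_periodic_tent[OF assms]])
  have "continuous_on {0..L} (\<lambda>t. max 0 (r - circle_dist L t b))"
    unfolding circle_dist_def by (intro continuous_intros)
  then show "((\<lambda>t. max 0 (r - circle_dist L t b)) has_integral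
      integral {0..L} (\<lambda>t. max 0 (r - circle_dist L t b))) {0..L}"
    using integrable_continuous_real integrable_integral by blast
qed (use periodic_tent_le assms in auto)

text \<open>The points (A e, B e) are the centres of disjoint l1-balls of radii r e on the torus of
  side L. Slicing the balls at a fixed second coordinate t gives disjoint arcs on the first
  circle, so the one-dimensional bound applies; integrated over t, the slice of the ball of radius
  r e has area at least (r e)^2.\<close>

lemma torus_packing_bound:
  fixes E :: "'a set" and A B r :: "'a \<Rightarrow> real"
  assumes "finite E" and "0 \<le> L"
    and B: "\<And>e. e \<in> E \<Longrightarrow> B e \<in> {0..L}"
    and r: "\<And>e. e \<in> E \<Longrightarrow> 0 \<le> r e \<and> 2 * r e \<le> L"
    and separated: "\<And>e f. e \<in> E \<Longrightarrow> f \<in> E \<Longrightarrow> e \<noteq> f \<Longrightarrow>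
                 r e + r f \<le> circle_dist L (A e) (A f) + circle_dist L (B e) (B f)"
  shows "2 * (\<Sum>e\<in>E. (r e)\<^sup>2) \<le> L\<^sup>2"
proof -
  define F where "F e = (\<lambda>t. max 0 (r e - circle_dist L t (B e)))" for e
  have slice: "(\<Sum>e\<in>E. F e t) \<le> L / 2" if t: "t \<in> {0..L}" for t
  proof -
    have "2 * (\<Sum>e\<in>E. F e t) \<le> L"
    proof (rule circle_packing_bound[OF \<open>finite E\<close> \<open>0 \<le> L\<close>])
      fix e assume "e \<in> E"
      then have "0 \<le> circle_dist L t (B e)" "0 \<le> r e" "2 * r e \<le> L"
        using r circle_dist_nonneg[OF t B] by auto
      then show "0 \<le> F e t \<and> F e t \<le> L / 2"
        using \<open>0 \<le> L\<close> by (auto simp: F_def max_def)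
    next
      fix e f assume ef: "e \<in> E" "f \<in> E" "e \<noteq> f" "0 < F e t" "0 < F f t"
      have "circle_dist L (B e) (B f) \<le> circle_dist L t (B e) + circle_dist L t (B f)"
        using circle_dist_triangle[OF B[OF ef(1)] t B[OF ef(2)]] circle_dist_commute[of L t "B e"]
        by simp
      then show "F e t + F f t \<le> circle_dist L (A e) (A f)"
        using ef(4,5) separated[OF ef(1-3)] unfolding F_def by auto
    qed
    then show ?thesis by simp
  qed
  have integrable: "F e integrable_on {0..L}" for e
    unfolding F_def circle_dist_def by (intro integrable_continuous_real continuous_intros)
  have "(\<Sum>e\<in>E. (r e)\<^sup>2) \<le> (\<Sum>e\<in>E. integral {0..L} (F e))"
    using integral_circle_tent_ge B r by (intro sum_mono) (auto simp: F_def)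
  also have "\<dots> = integral {0..L} (\<lambda>t. \<Sum>e\<in>E. F e t)"
    using integrable by (simp add: integral_sum[OF \<open>finite E\<close>])
  also have "\<dots> \<le> integral {0..L} (\<lambda>_. L / 2)"
    using integrable slice by (intro integral_le integrable_sum \<open>finite E\<close>) auto
  finally show ?thesis
    using \<open>0 \<le> L\<close> by (simp add: power2_eq_square)
qed

lemma sum_le_of_sum_squares_le:
  fixes r :: "'a \<Rightarrow> real"
  assumes "finite E" "0 \<le> L" "2 * (\<Sum>e\<in>E. (r e)\<^sup>2) \<le> L\<^sup>2"
  shows "(\<Sum>e\<in>E. r e) \<le> sqrt (real (card E) / 2) * L"
proof (rule power2_le_imp_le)
  have "(\<Sum>e\<in>E. r e)\<^sup>2 \<le> (\<Sum>e\<in>E. (r e)\<^sup>2) * real (card E)"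
    by (rule sum_squared_le_sum_of_squares)
  also have "\<dots> \<le> L\<^sup>2 / 2 * real (card E)"
    using assms(3) by (intro mult_right_mono) auto
  also have "\<dots> = (sqrt (real (card E) / 2) * L)\<^sup>2"
    by (simp add: power_mult_distrib)
  finally show "(\<Sum>e\<in>E. r e)\<^sup>2 \<le> (sqrt (real (card E) / 2) * L)\<^sup>2" .
qed (use assms(2) in simp)

section \<open>Tours and 2-changes\<close>

lemma tour_length_eq: "is_tour n T \<Longrightarrow> length T = n"
  unfolding is_tour_def by (metis card_lessThan distinct_card)

lemma tour_nth_less: "is_tour n T \<Longrightarrow> i < n \<Longrightarrow> T ! i < n"
  using tour_length_eq by (fastforce simp: is_tour_def)

lemma tour_nth_eq_iff: "is_tour n T \<Longrightarrow> i < n \<Longrightarrow> j < n \<Longrightarrow> T ! i = T ! j \<longleftrightarrow> i = j"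
  using tour_length_eq by (simp add: is_tour_def nth_eq_iff_index_eq)

lemma mod_neq_of_less:
  fixes a b n :: nat
  assumes "a < b" "b < a + n"
  shows "a mod n \<noteq> b mod n"
proof
  assume "a mod n = b mod n"
  then have "n dvd b - a"
    using assms(1) mod_eq_dvd_iff_nat[of a b n] by simp
  then show False
    using assms by (auto dest: dvd_imp_le)
qed

lemma Suc_mod_less: "t < n \<Longrightarrow> Suc t mod n < (n::nat)"
  by simp

lemma Suc_mod_neq: "2 \<le> n \<Longrightarrow> e < n \<Longrightarrow> Suc e mod n \<noteq> e"
  by (cases "Suc e = n") auto

lemma finite_tours: "finite {T. is_tour n T}"
proof (rule finite_subset)
  show "{T. is_tour n T} \<subseteq> {xs. set xs \<subseteq> {..<n} \<and> length xs = n}"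
    using tour_length_eq by (auto simp: is_tour_def)
qed (simp add: finite_lists_length_eq)

lemma opt_length_attained: "\<exists>S. is_tour n S \<and> opt_length n c = tour_length c S"
proof -
  have "is_tour n [0..<n]"
    by (simp add: is_tour_def atLeast0LessThan)
  then have "opt_length n c \<in> tour_length c ` {T. is_tour n T}"
    unfolding opt_length_def using finite_tours by (intro Min_in) auto
  then show ?thesis by auto
qed

lemma opt_length_eqI:
  assumes "is_tour n S" "tour_length c S = x" "\<And>T. is_tour n T \<Longrightarrow> x \<le> tour_length c T"
  shows "opt_length n c = x"
  unfolding opt_length_def using assms finite_tours by (intro Min_eqI) auto

lemma is_tour_two_change:
  assumes "is_tour n T" "i < j" "j < length T"
  shows "is_tour n (two_change T i j)"
proof -
  have "T = take (Suc i) T @ drop (Suc i) (take (Suc j) T) @ drop (Suc j) T"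
    using assms(2,3)
    by (metis append.assoc append_take_drop_id min.absorb1 Suc_leI take_take less_imp_le_nat Suc_le_mono)
  then have "distinct (take (Suc i) T @ drop (Suc i) (take (Suc j) T) @ drop (Suc j) T)"
    and "set (take (Suc i) T @ drop (Suc i) (take (Suc j) T) @ drop (Suc j) T) = {..<n}"
    using assms(1) unfolding is_tour_def by metis+
  then show ?thesis
    unfolding is_tour_def two_change_def by auto
qed

lemma two_opt_reachable_tour:
  assumes "(two_opt_step c)\<^sup>*\<^sup>* T0 T" "is_tour n T0"
  shows "is_tour n T"
  using assms
  by induction (auto simp: two_opt_step_def improving_two_change_def intro: is_tour_two_change)

lemma two_opt_output_no_improving:
  "two_opt_output c T0 T \<Longrightarrow> \<not> improving_two_change c T i j"
  unfolding two_opt_output_def two_opt_step_def by blast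

lemma two_opt_output_of_no_improving:
  assumes "\<And>i j. \<not> improving_two_change c T0 i j"
  shows "two_opt_output c T0 T \<longleftrightarrow> T = T0"
proof -
  have "\<not> two_opt_step c T0 T'" for T'
    using assms by (simp add: two_opt_step_def)
  then show ?thesis
    unfolding two_opt_output_def by (auto elim: converse_rtranclpE)
qed

section \<open>The upper bound\<close>

locale tour_positions =
  fixes n :: nat and c :: "nat \<Rightarrow> nat \<Rightarrow> real" and S :: "nat list"
  assumes two_le_n: "2 \<le> n" and metric: "metric_tsp n c" and tour: "is_tour n S"
begin

definition city :: "nat \<Rightarrow> nat" where
  "city m = S ! (m mod n)"

definition prefix_length :: "nat \<Rightarrow> real" where
  "prefix_length i = (\<Sum>m<i. c (city m) (city (Suc m)))"

definition pos :: "nat \<Rightarrow> real" where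
  "pos v = prefix_length (inv_into {..<n} ((!) S) v)"

abbreviation L :: real where
  "L \<equiv> tour_length c S"

lemma city_less: "city m < n"
  using tour_nth_less[OF tour] two_le_n by (simp add: city_def)

lemma city_neq: "a < b \<Longrightarrow> b < a + n \<Longrightarrow> city a \<noteq> city b"
  using mod_neq_of_less tour_nth_eq_iff[OF tour] two_le_n by (simp add: city_def)

lemma cost_commute: "x < n \<Longrightarrow> y < n \<Longrightarrow> x \<noteq> y \<Longrightarrow> c x y = c y x"
  using metric by (simp add: metric_tsp_def)

lemma cost_nonneg: "x < n \<Longrightarrow> y < n \<Longrightarrow> x \<noteq> y \<Longrightarrow> 0 \<le> c x y"
  using metric by (simp add: metric_tsp_def)

lemma cost_triangle:
  "x < n \<Longrightarrow> y < n \<Longrightarrow> z < n \<Longrightarrow> x \<noteq> y \<Longrightarrow> y \<noteq> z \<Longrightarrow> x \<noteq> z \<Longrightarrow> c x z \<le> c x y + c y z"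
  using metric by (simp add: metric_tsp_def)

lemma prefix_length_mono: "i \<le> j \<Longrightarrow> prefix_length i \<le> prefix_length j"
  unfolding prefix_length_def
  using cost_nonneg[OF city_less city_less city_neq] two_le_n by (intro sum_mono2) auto

lemma prefix_length_n: "prefix_length n = L"
  using tour_length_eq[OF tour] by (simp add: prefix_length_def tour_length_def city_def)

lemma prefix_length_add_n: "prefix_length (n + i) = L + prefix_length i"
proof (induction i)
  case 0
  show ?case using prefix_length_n by (simp add: prefix_length_def)
next
  case (Suc i)
  have "city (n + i) = city i" "city (Suc (n + i)) = city (Suc i)"
    by (simp_all add: city_def flip: add_Suc_right)
  with Suc show ?case by (simp add: prefix_length_def)
qed

lemma prefix_length_range: "i \<le> n \<Longrightarrow> prefix_length i \<in> {0..L}"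
  using prefix_length_mono[of 0 i] prefix_length_mono[of i n]
  unfolding prefix_length_n by (simp add: prefix_length_def)

lemma cost_le_prefix_length_diff:
  "i < j \<Longrightarrow> j < i + n \<Longrightarrow> c (city i) (city j) \<le> prefix_length j - prefix_length i"
proof (induction j)
  case (Suc j)
  show ?case
  proof (cases "j = i")
    case True
    then show ?thesis by (simp add: prefix_length_def)
  next
    case False
    with Suc.prems have "i < j" by simp
    then have "c (city i) (city (Suc j)) \<le> c (city i) (city j) + c (city j) (city (Suc j))"
      using Suc.prems by (intro cost_triangle city_less city_neq) auto
    also have "\<dots> \<le> prefix_length j - prefix_length i + c (city j) (city (Suc j))"
      using Suc.IH \<open>i < j\<close> Suc.prems by simp
    finally show ?thesis by (simp add: prefix_length_def)
  qed
qed simp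

lemma cost_le_circle_dist_prefix:
  assumes "i < j" "j < n"
  shows "c (S ! i) (S ! j) \<le> circle_dist L (prefix_length i) (prefix_length j)"
proof -
  have city: "city i = S ! i" "city j = S ! j" "city (n + i) = S ! i"
    using assms by (simp_all add: city_def)
  have "c (S ! i) (S ! j) \<le> prefix_length j - prefix_length i"
    using cost_le_prefix_length_diff[of i j] assms city by simp
  moreover have "c (S ! i) (S ! j) = c (city j) (city (n + i))"
    using city assms by (metis cost_commute city_less city_neq add.commute add_less_cancel_left)
  then have "c (S ! i) (S ! j) \<le> L - (prefix_length j - prefix_length i)"
    using cost_le_prefix_length_diff[of j "n + i"] assms by (simp add: prefix_length_add_n)
  moreover have "prefix_length i \<le> prefix_length j"
    using prefix_length_mono assms by simp
  ultimately show ?thesis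
    unfolding circle_dist_def by (simp add: abs_if)
qed

lemma pos_eq: "i < n \<Longrightarrow> pos (S ! i) = prefix_length i"
  using tour_nth_eq_iff[OF tour] unfolding pos_def
  by (subst inv_into_f_f) (auto intro: inj_onI)

lemma pos_range: "v < n \<Longrightarrow> pos v \<in> {0..L}"
  using tour tour_length_eq[OF tour] prefix_length_range pos_eq
  by (metis in_set_conv_nth is_tour_def lessThan_iff less_imp_le)

lemma cost_le_circle_dist:
  assumes "u < n" "v < n" "u \<noteq> v"
  shows "c u v \<le> circle_dist L (pos u) (pos v)"
proof -
  obtain i j where "i < n" "j < n" "u = S ! i" "v = S ! j"
    using assms tour tour_length_eq[OF tour] by (metis in_set_conv_nth is_tour_def lessThan_iff)
  moreover have "i \<noteq> j" using calculation assms by auto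
  ultimately show ?thesis
    using cost_le_circle_dist_prefix[of i j] cost_le_circle_dist_prefix[of j i]
      cost_commute assms circle_dist_commute pos_eq
    by (metis linorder_neqE_nat)
qed

lemma two_opt_optimal_edges_separated:
  assumes T: "is_tour n T" and no_improving: "\<And>i j. \<not> improving_two_change c T i j"
    and "e < f" "f < n"
  shows "c (T ! e) (T ! (Suc e mod n)) + c (T ! f) (T ! (Suc f mod n))
    \<le> circle_dist L (pos (T ! e)) (pos (T ! f))
      + circle_dist L (pos (T ! (Suc e mod n))) (pos (T ! (Suc f mod n)))"
proof -
  have succ_e: "Suc e mod n = Suc e" and "Suc e < n" "Suc f mod n < n" "Suc e \<noteq> Suc f mod n"
    using assms(3,4) by (auto simp: mod_Suc)
  have "c (T ! e) (T ! Suc e) + c (T ! f) (T ! (Suc f mod n))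
      \<le> c (T ! e) (T ! f) + c (T ! Suc e) (T ! (Suc f mod n))"
    using no_improving[of e f] assms(3,4) tour_length_eq[OF T]
    by (simp add: improving_two_change_def Let_def)
  moreover have "c (T ! e) (T ! f) \<le> circle_dist L (pos (T ! e)) (pos (T ! f))"
    and "c (T ! Suc e) (T ! (Suc f mod n))
      \<le> circle_dist L (pos (T ! Suc e)) (pos (T ! (Suc f mod n)))"
    using assms(3,4) \<open>Suc e < n\<close> \<open>Suc f mod n < n\<close> \<open>Suc e \<noteq> Suc f mod n\<close>
    by (auto intro!: cost_le_circle_dist simp: tour_nth_less[OF T] tour_nth_eq_iff[OF T])
  ultimately show ?thesis
    unfolding succ_e by linarith
qed

lemma two_opt_optimal_tour_length_le:
  assumes T: "is_tour n T" and no_improving: "\<And>i j. \<not> improving_two_change c T i j"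
  shows "tour_length c T \<le> sqrt (real n / 2) * L"
proof -
  define A where "A e = pos (T ! e)" for e
  define B where "B e = pos (T ! (Suc e mod n))" for e
  define r where "r e = c (T ! e) (T ! (Suc e mod n))" for e
  have edge: "T ! e < n" "T ! (Suc e mod n) < n" "T ! e \<noteq> T ! (Suc e mod n)" if "e < n" for e
    using that Suc_mod_neq[OF two_le_n that] tour_nth_less[OF T] tour_nth_eq_iff[OF T] by auto
  have "0 \<le> L"
    using prefix_length_range[of 0] by simp
  have "2 * (\<Sum>e<n. (r e)\<^sup>2) \<le> L\<^sup>2"
  proof (rule torus_packing_bound[OF _ \<open>0 \<le> L\<close>])
    fix e assume "e \<in> {..<n}"
    with edge[of e] show "B e \<in> {0..L}"
      unfolding B_def by (simp only: lessThan_iff pos_range)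
    have "r e \<le> circle_dist L (A e) (B e)"
      using edge[of e] \<open>e \<in> {..<n}\<close> by (simp add: r_def A_def B_def cost_le_circle_dist)
    moreover have "0 \<le> r e"
      using edge[of e] \<open>e \<in> {..<n}\<close> by (simp add: r_def cost_nonneg)
    ultimately show "0 \<le> r e \<and> 2 * r e \<le> L"
      using circle_dist_le_half[of L "A e" "B e"] by simp
  next
    fix e f assume "e \<in> {..<n}" "f \<in> {..<n}" "e \<noteq> f"
    then show "r e + r f \<le> circle_dist L (A e) (A f) + circle_dist L (B e) (B f)"
      using two_opt_optimal_edges_separated[OF T no_improving, of e f]
        two_opt_optimal_edges_separated[OF T no_improving, of f e]
      by (cases "e < f") (auto simp: r_def A_def B_def circle_dist_commute)
  qed simp
  then have "(\<Sum>e<n. r e) \<le> sqrt (real n / 2) * L"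
    using sum_le_of_sum_squares_le[of "{..<n}" L r] \<open>0 \<le> L\<close> by simp
  then show ?thesis
    using tour_length_eq[OF T] by (simp add: tour_length_def r_def)
qed

end

section \<open>The lower-bound instance\<close>

lemma tour_exits:
  assumes T: "is_tour n T" and "u < n" "v < n" "P u" "\<not> P v"
  shows "\<exists>i<n. P (T ! i) \<and> \<not> P (T ! (Suc i mod n))"
proof (rule ccontr)
  assume "\<not> ?thesis"
  then have stay: "i < n \<Longrightarrow> P (T ! i) \<Longrightarrow> P (T ! (Suc i mod n))" for i
    by blast
  obtain i0 j where "i0 < n" "T ! i0 = u" "j < n" "T ! j = v"
    using T assms(2,3) tour_length_eq[OF T] by (metis in_set_conv_nth is_tour_def lessThan_iff)
  have "P (T ! ((i0 + m) mod n))" for m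
  proof (induction m)
    case 0
    show ?case using \<open>i0 < n\<close> \<open>T ! i0 = u\<close> \<open>P u\<close> by simp
  next
    case (Suc m)
    then show ?case
      using stay[of "(i0 + m) mod n"] \<open>i0 < n\<close> by (simp add: mod_Suc_eq)
  qed
  from this[of "n + j - i0"] show False
    using \<open>i0 < n\<close> \<open>j < n\<close> \<open>T ! j = v\<close> \<open>\<not> P v\<close> by simp
qed

text \<open>Every cluster is left by some edge of the tour, and these exit edges are distinct.\<close>

lemma tour_length_ge_card_clusters:
  fixes cl :: "nat \<Rightarrow> 'a"
  assumes "metric_tsp n c" and T: "is_tour n T"
    and apart: "\<And>u v. u < n \<Longrightarrow> v < n \<Longrightarrow> cl u \<noteq> cl v \<Longrightarrow> 1 \<le> c u v"
    and "u < n" "v < n" "cl u \<noteq> cl v"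
  shows "real (card (cl ` {..<n})) \<le> tour_length c T"
proof -
  have "2 \<le> n"
    using assms(4-6) by (cases "u = v") auto
  define r where "r i = c (T ! i) (T ! (Suc i mod n))" for i
  have r_nonneg: "0 \<le> r i" if "i < n" for i
  proof -
    have "T ! i < n" "T ! (Suc i mod n) < n" "T ! i \<noteq> T ! (Suc i mod n)"
      using that tour_nth_less[OF T] tour_nth_eq_iff[OF T] Suc_mod_neq[OF \<open>2 \<le> n\<close> that]
      by (auto simp: Suc_mod_less)
    then show ?thesis
      using assms(1) by (simp add: r_def metric_tsp_def)
  qed
  have exit: "\<exists>i<n. cl (T ! i) = p \<and> cl (T ! (Suc i mod n)) \<noteq> p" if "p \<in> cl ` {..<n}" for p
    using that tour_exits[OF T, of _ _ "\<lambda>w. cl w = p"] assms(4-6) by (metis imageE lessThan_iff)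
  then obtain g where g: "\<And>p. p \<in> cl ` {..<n} \<Longrightarrow>
      g p < n \<and> cl (T ! g p) = p \<and> cl (T ! (Suc (g p) mod n)) \<noteq> p"
    by metis
  then have "inj_on g (cl ` {..<n})"
    by (metis inj_onI)
  then have "real (card (cl ` {..<n})) = (\<Sum>i\<in>g ` cl ` {..<n}. 1)"
    by (simp add: card_image)
  also have "\<dots> \<le> (\<Sum>i\<in>g ` cl ` {..<n}. r i)"
    using g tour_nth_less[OF T] by (intro sum_mono) (force simp: r_def intro!: apart)
  also have "\<dots> \<le> (\<Sum>i<n. r i)"
    using g r_nonneg by (intro sum_mono2) auto
  also have "\<dots> = tour_length c T"
    using tour_length_eq[OF T] by (simp add: tour_length_def r_def)
  finally show ?thesis .
qed

lemma sorted_onto_step_le: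
  fixes f :: "'a \<Rightarrow> nat"
  assumes sorted: "sorted (map f xs)"
    and onto: "\<And>q. q < m \<Longrightarrow> \<exists>x\<in>set xs. f x = q"
    and bounded: "\<And>x. x \<in> set xs \<Longrightarrow> f x < m"
    and "Suc i < length xs"
  shows "f (xs ! Suc i) \<le> Suc (f (xs ! i))"
proof (rule ccontr)
  assume gap: "\<not> ?thesis"
  then have "Suc (f (xs ! i)) < m"
    using bounded[of "xs ! Suc i"] assms(4) by simp
  then obtain p where p: "p < length xs" "f (xs ! p) = Suc (f (xs ! i))"
    using onto by (metis in_set_conv_nth)
  have mono: "a \<le> b \<Longrightarrow> b < length xs \<Longrightarrow> f (xs ! a) \<le> f (xs ! b)" for a b
    using sorted_nth_mono[OF sorted, of a b] by simp
  show False
    using mono[of p i] mono[of "Suc i" p] p gap assms(4) by (cases "p \<le> i") auto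
qed

text \<open>City 2m (resp. 2m+1), where m = a + k b with a, b < k, lies in the left cluster a
  (resp. the right cluster (a + b) mod k). Left cluster p is numbered 2p and right cluster p is
  numbered 2p+1, so a cluster has the parity of its cities, and the two sides are the parities.
  Since (a, (a + b) mod k) determines (a, b), the clusters of t and t+1 determine t.\<close>

definition grid_cluster :: "nat \<Rightarrow> nat \<Rightarrow> nat" where
  "grid_cluster k t =
     (let m = t div 2 in if even t then 2 * (m mod k) else 2 * ((m + m div k) mod k) + 1)"

definition grid_dist :: "nat \<Rightarrow> nat \<Rightarrow> nat \<Rightarrow> real" where
  "grid_dist k u v =
     (if grid_cluster k u = grid_cluster k v then 0 else if even u = even v then 2 else 1)"

lemma grid_cluster_double [simp]: "grid_cluster k (2 * m) = 2 * (m mod k)"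
  by (simp add: grid_cluster_def)

lemma grid_cluster_double_Suc [simp]: "grid_cluster k (Suc (2 * m)) = 2 * ((m + m div k) mod k) + 1"
  by (simp add: grid_cluster_def)

lemma even_grid_cluster: "even (grid_cluster k t) \<longleftrightarrow> even t"
  by (simp add: grid_cluster_def Let_def)

lemma grid_cluster_less:
  assumes "0 < k"
  shows "grid_cluster k t < 2 * k"
proof -
  have bound: "2 * (x mod k) + 1 < 2 * k" for x
    using mod_less_divisor[OF assms, of x] by linarith
  show ?thesis
    using bound[of "t div 2"] bound[of "t div 2 + t div 2 div k"]
    unfolding grid_cluster_def Let_def by auto
qed

lemma grid_cluster_surj:
  assumes "0 < k" "p < 2 * k"
  shows "\<exists>t < 2 * k\<^sup>2. grid_cluster k t = p"
proof -
  have "2 * k \<le> 2 * k\<^sup>2"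
    using assms by (simp add: power2_eq_square)
  then show ?thesis
    using assms
    by (cases "even p") (auto elim!: evenE oddE intro!: exI[of _ p])
qed

lemma grid_dist_triangle: "grid_dist k x z \<le> grid_dist k x y + grid_dist k y z"
  using even_grid_cluster[of k x] even_grid_cluster[of k y] even_grid_cluster[of k z]
  unfolding grid_dist_def by auto

lemma metric_tsp_grid_dist: "metric_tsp n (grid_dist k)"
  unfolding metric_tsp_def using grid_dist_triangle by (auto simp: grid_dist_def)

lemma grid_dist_ge_one: "grid_cluster k u \<noteq> grid_cluster k v \<Longrightarrow> 1 \<le> grid_dist k u v"
  by (simp add: grid_dist_def)

lemma grid_dist_opposite: "even u \<noteq> even v \<Longrightarrow> grid_dist k u v = 1"
  using even_grid_cluster[of k u] even_grid_cluster[of k v] by (auto simp: grid_dist_def)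

lemma mod_add_cancel_less:
  fixes a b b' k :: nat
  assumes "(a + b) mod k = (a + b') mod k" "b < k" "b' < k"
  shows "b = b'"
  using assms by (metis Nat.diff_cancel linear mod_eq_dvd_iff_nat mod_nat_eqI nat_add_left_cancel_le)

lemma latin_square_inj:
  fixes k m m' :: nat
  assumes "m < k\<^sup>2" "m' < k\<^sup>2" "m mod k = m' mod k"
    and "(m + m div k) mod k = (m' + m' div k) mod k"
  shows "m = m'"
proof -
  have "m div k < k" "m' div k < k"
    using assms(1,2) by (simp_all add: power2_eq_square less_mult_imp_div_less)
  moreover have "(m mod k + m div k) mod k = (m mod k + m' div k) mod k"
    using assms(3,4) by (metis mod_add_left_eq)
  ultimately have "m div k = m' div k"
    by (rule mod_add_cancel_less[rotated])
  then show ?thesis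
    using assms(3) by (metis div_mod_decomp)
qed

lemma Suc_mod_cancel: "Suc m mod k = Suc m' mod k \<Longrightarrow> m mod k = m' mod (k::nat)"
  by (metis mod_Suc nat.inject not_less_eq zero_less_Suc)

lemma grid_cluster_Suc_mod:
  assumes "t < 2 * k\<^sup>2"
  shows "grid_cluster k (Suc t mod (2 * k\<^sup>2)) =
    (if even t then 2 * ((t div 2 + t div 2 div k) mod k) + 1 else 2 * (Suc (t div 2) mod k))"
proof (cases "even t")
  case True
  then obtain m where t: "t = 2 * m" by (rule evenE)
  with assms have "Suc t mod (2 * k\<^sup>2) = Suc (2 * m)"
    by (metis Suc_lessI dvd_mult2 even_Suc even_numeral mod_less)
  then show ?thesis
    using t by simp
next
  case False
  then obtain m where t: "t = Suc (2 * m)" by (metis oddE Suc_eq_plus1)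
  then have "Suc t mod (2 * k\<^sup>2) = 2 * (Suc m mod k\<^sup>2)"
    by (simp add: mult_mod_right)
  moreover have "Suc m mod k\<^sup>2 mod k = Suc m mod k"
    by (simp add: mod_mod_cancel power2_eq_square)
  ultimately show ?thesis
    using t by simp
qed

lemma grid_cluster_succ_inj:
  assumes "t < 2 * k\<^sup>2" "t' < 2 * k\<^sup>2"
    and "grid_cluster k t = grid_cluster k t'"
    and "grid_cluster k (Suc t mod (2 * k\<^sup>2)) = grid_cluster k (Suc t' mod (2 * k\<^sup>2))"
  shows "t = t'"
proof -
  define m m' where "m = t div 2" and "m' = t' div 2"
  have "m < k\<^sup>2" "m' < k\<^sup>2"
    using assms(1,2) by (simp_all add: m_def m'_def)
  have parity: "even t \<longleftrightarrow> even t'"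
    using assms(3) even_grid_cluster by metis
  have "m mod k = m' mod k \<and> (m + m div k) mod k = (m' + m' div k) mod k"
  proof (cases "even t")
    case True
    with parity assms(3,4) show ?thesis
      by (auto simp: grid_cluster_Suc_mod[OF assms(1)] grid_cluster_Suc_mod[OF assms(2)]
          m_def m'_def elim!: evenE)
  next
    case False
    with parity assms(3,4) show ?thesis
      by (auto simp: grid_cluster_Suc_mod[OF assms(1)] grid_cluster_Suc_mod[OF assms(2)]
          m_def m'_def elim!: oddE intro: Suc_mod_cancel)
  qed
  then have "m = m'"
    using latin_square_inj \<open>m < k\<^sup>2\<close> \<open>m' < k\<^sup>2\<close> by blast
  then show ?thesis
    using parity by (simp add: m_def m'_def) (metis odd_two_times_div_two_succ dvd_mult_div_cancel)
qed

lemma even_Suc_mod_iff: "even n \<Longrightarrow> t < n \<Longrightarrow> even (Suc t mod n) \<longleftrightarrow> odd t"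
  by (cases "Suc t = n") auto

lemma grid_dist_identity_edge: "t < 2 * k\<^sup>2 \<Longrightarrow> grid_dist k t (Suc t mod (2 * k\<^sup>2)) = 1"
  by (simp add: grid_dist_opposite even_Suc_mod_iff)

lemma grid_identity_tour_length: "tour_length (grid_dist k) [0..<2 * k\<^sup>2] = 2 * k\<^sup>2"
proof -
  have "tour_length (grid_dist k) [0..<2 * k\<^sup>2] = (\<Sum>t<2 * k\<^sup>2. grid_dist k t (Suc t mod (2 * k\<^sup>2)))"
    unfolding tour_length_def by (intro sum.cong) (auto simp: Suc_mod_less)
  also have "\<dots> = (\<Sum>t<2 * k\<^sup>2. 1)"
    by (intro sum.cong) (auto simp: grid_dist_identity_edge)
  finally show ?thesis by simp
qed

lemma grid_identity_no_improving: "\<not> improving_two_change (grid_dist k) [0..<2 * k\<^sup>2] i j"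
proof
  assume improving: "improving_two_change (grid_dist k) [0..<2 * k\<^sup>2] i j"
  define j' where "j' = Suc j mod (2 * k\<^sup>2)"
  have ij: "i < j" "j < 2 * k\<^sup>2" and "Suc i < 2 * k\<^sup>2" "j' < 2 * k\<^sup>2"
    using improving by (auto simp: improving_two_change_def j'_def Suc_mod_less)
  then have "grid_dist k i j + grid_dist k (Suc i) j' < 2"
    using improving
    by (simp add: improving_two_change_def Let_def j'_def grid_dist_identity_edge grid_dist_opposite)
  moreover have "even j' \<longleftrightarrow> odd j"
    using ij by (simp add: j'_def even_Suc_mod_iff)
  moreover have "\<not> (grid_cluster k i = grid_cluster k j \<and> grid_cluster k (Suc i) = grid_cluster k j')"
    using grid_cluster_succ_inj[of i k j] ij by (auto simp: j'_def)
  ultimately show False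
    using even_grid_cluster[of k i] even_grid_cluster[of k j]
      even_grid_cluster[of k "Suc i"] even_grid_cluster[of k j']
    by (auto simp: grid_dist_def split: if_splits)
qed

definition grid_sorted_tour :: "nat \<Rightarrow> nat list" where
  "grid_sorted_tour k = sort_key (grid_cluster k) [0..<2 * k\<^sup>2]"

lemma is_tour_grid_sorted_tour: "is_tour (2 * k\<^sup>2) (grid_sorted_tour k)"
  by (simp add: grid_sorted_tour_def is_tour_def atLeast0LessThan)

lemma length_grid_sorted_tour: "length (grid_sorted_tour k) = 2 * k\<^sup>2"
  by (simp add: grid_sorted_tour_def)

lemma set_grid_sorted_tour: "set (grid_sorted_tour k) = {..<2 * k\<^sup>2}"
  by (auto simp: grid_sorted_tour_def)

lemma sorted_grid_sorted_tour: "sorted (map (grid_cluster k) (grid_sorted_tour k))"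
  by (simp add: grid_sorted_tour_def)

lemma grid_sorted_tour_mono:
  "a \<le> b \<Longrightarrow> b < 2 * k\<^sup>2 \<Longrightarrow>
    grid_cluster k (grid_sorted_tour k ! a) \<le> grid_cluster k (grid_sorted_tour k ! b)"
  using sorted_nth_mono[OF sorted_grid_sorted_tour, of a b] by (simp add: length_grid_sorted_tour)

lemma grid_sorted_tour_onto:
  assumes "0 < k" "q < 2 * k"
  shows "\<exists>p < 2 * k\<^sup>2. grid_cluster k (grid_sorted_tour k ! p) = q"
proof -
  obtain t where "t < 2 * k\<^sup>2" "grid_cluster k t = q"
    using grid_cluster_surj[OF assms] by blast
  moreover obtain p where "p < 2 * k\<^sup>2" "grid_sorted_tour k ! p = t"
    using calculation(1) set_grid_sorted_tour[of k] length_grid_sorted_tour[of k]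
    by (metis in_set_conv_nth lessThan_iff)
  ultimately show ?thesis by blast
qed

lemma grid_sorted_tour_step:
  assumes "0 < k" "Suc i < 2 * k\<^sup>2"
  shows "grid_dist k (grid_sorted_tour k ! i) (grid_sorted_tour k ! Suc i)
    = real (grid_cluster k (grid_sorted_tour k ! Suc i)) - grid_cluster k (grid_sorted_tour k ! i)"
proof -
  let ?cl = "\<lambda>i. grid_cluster k (grid_sorted_tour k ! i)"
  have "?cl (Suc i) \<le> Suc (?cl i)"
    using sorted_onto_step_le[OF sorted_grid_sorted_tour, where m = "2 * k" and i = i]
      assms grid_cluster_surj[OF assms(1)] grid_cluster_less[OF assms(1)]
    by (auto simp: set_grid_sorted_tour length_grid_sorted_tour)
  then consider "?cl (Suc i) = ?cl i" | "?cl (Suc i) = Suc (?cl i)"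
    using grid_sorted_tour_mono[of i "Suc i" k] assms(2) by linarith
  then show ?thesis
    using even_grid_cluster[of k "grid_sorted_tour k ! i"]
      even_grid_cluster[of k "grid_sorted_tour k ! Suc i"]
    by cases (auto simp: grid_dist_def)
qed

lemma grid_sorted_tour_length:
  assumes "0 < k"
  shows "tour_length (grid_dist k) (grid_sorted_tour k) = 2 * k"
proof -
  define S where "S = grid_sorted_tour k"
  obtain M where M: "2 * k\<^sup>2 = Suc M"
    using assms by (metis gr0_conv_Suc mult_pos_pos zero_less_numeral zero_less_power)
  obtain p0 p1 where "p0 \<le> M" "grid_cluster k (S ! p0) = 0"
    and "p1 \<le> M" "grid_cluster k (S ! p1) = 2 * k - 1"
    using grid_sorted_tour_onto[OF assms, of 0] grid_sorted_tour_onto[OF assms, of "2 * k - 1"]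
      assms M by (auto simp: S_def less_Suc_eq_le)
  then have first: "grid_cluster k (S ! 0) = 0" and last: "grid_cluster k (S ! M) = 2 * k - 1"
    using grid_sorted_tour_mono[of 0 p0 k] grid_sorted_tour_mono[of p1 M k]
      grid_cluster_less[OF assms, of "S ! M"] M by (simp_all add: S_def)
  have "tour_length (grid_dist k) S
      = (\<Sum>i<M. grid_dist k (S ! i) (S ! (Suc i mod Suc M))) + grid_dist k (S ! M) (S ! 0)"
    unfolding tour_length_def S_def length_grid_sorted_tour M by simp
  also have "(\<Sum>i<M. grid_dist k (S ! i) (S ! (Suc i mod Suc M)))
      = (\<Sum>i<M. real (grid_cluster k (S ! Suc i)) - grid_cluster k (S ! i))"
    using grid_sorted_tour_step[OF assms] M by (intro sum.cong) (auto simp: S_def)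
  also have "\<dots> = 2 * k - 1"
    using sum_lessThan_telescope[of "\<lambda>i. real (grid_cluster k (S ! i))" M] first last assms
    by (simp add: of_nat_diff)
  also have "grid_dist k (S ! M) (S ! 0) = 1"
    using first last assms even_grid_cluster[of k "S ! 0"] even_grid_cluster[of k "S ! M"]
    by (intro grid_dist_opposite) auto
  finally show ?thesis
    using assms by (simp add: S_def)
qed

lemma grid_tour_length_ge:
  assumes "0 < k" "is_tour (2 * k\<^sup>2) T"
  shows "2 * k \<le> tour_length (grid_dist k) T"
proof -
  have "grid_cluster k ` {..<2 * k\<^sup>2} = {..<2 * k}"
    using grid_cluster_less[OF assms(1)] grid_cluster_surj[OF assms(1)] by fastforce
  moreover have "1 < 2 * k\<^sup>2"
    using assms by (simp add: Suc_lessI)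
  moreover have "grid_cluster k 0 \<noteq> grid_cluster k 1"
    using even_grid_cluster[of k 0] even_grid_cluster[of k 1] by auto
  ultimately show ?thesis
    using tour_length_ge_card_clusters[OF metric_tsp_grid_dist[of _ k] assms(2),
        where cl = "grid_cluster k" and u = 0 and v = 1] grid_dist_ge_one assms(1) by simp
qed

lemma grid_opt_length: "0 < k \<Longrightarrow> opt_length (2 * k\<^sup>2) (grid_dist k) = 2 * k"
  using is_tour_grid_sorted_tour grid_sorted_tour_length grid_tour_length_ge
  by (intro opt_length_eqI) auto

lemma two_opt_output_length_le:
  assumes "2 \<le> n" "metric_tsp n c" "is_tour n T0" "two_opt_output c T0 T"
  shows "tour_length c T \<le> sqrt (real n / 2) * opt_length n c"
proof -
  obtain S where S: "is_tour n S" "opt_length n c = tour_length c S"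
    using opt_length_attained by blast
  interpret tour_positions n c S
    using assms(1,2) S(1) by unfold_locales
  have "is_tour n T"
    using assms(3,4) two_opt_reachable_tour by (auto simp: two_opt_output_def)
  then show ?thesis
    using two_opt_optimal_tour_length_le two_opt_output_no_improving[OF assms(4)] S(2) by simp
qed

lemma grid_two_opt_output_iff:
  "two_opt_output (grid_dist k) [0..<2 * k\<^sup>2] T \<longleftrightarrow> T = [0..<2 * k\<^sup>2]"
  by (rule two_opt_output_of_no_improving) (rule grid_identity_no_improving)

lemma grid_identity_tour_length_tight:
  assumes "0 < k"
  shows "tour_length (grid_dist k) [0..<2 * k\<^sup>2]
    = sqrt (real (2 * k\<^sup>2) / 2) * opt_length (2 * k\<^sup>2) (grid_dist k)"
  using assms by (simp add: grid_identity_tour_length grid_opt_length) (simp add: power2_eq_square)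

theorem mainTheorem2:
  shows "(\<forall>n c T0 T. 3 \<le> n \<longrightarrow> metric_tsp n c \<longrightarrow> is_tour n T0 \<longrightarrow> two_opt_output c T0 T \<longrightarrow>
            tour_length c T \<le> sqrt (real n / 2) * opt_length n c)
       \<and> (\<forall>k::nat. 0 < k \<longrightarrow> (let n = 2 * k\<^sup>2 in
            \<exists>c T0. metric_tsp n c \<and> is_tour n T0 \<and> 0 < opt_length n c \<and>
              (\<exists>T. two_opt_output c T0 T) \<and>
              (\<forall>T. two_opt_output c T0 T \<longrightarrow>
                 tour_length c T = sqrt (real n / 2) * opt_length n c)))"
proof (intro conjI allI impI)
  fix n c T0 T
  assume "3 \<le> n" "metric_tsp n c" "is_tour n T0" "two_opt_output c T0 T"
  then show "tour_length c T \<le> sqrt (real n / 2) * opt_length n c"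
    by (intro two_opt_output_length_le) auto
next
  fix k :: nat
  assume "0 < k"
  then show "let n = 2 * k\<^sup>2 in \<exists>c T0. metric_tsp n c \<and> is_tour n T0 \<and> 0 < opt_length n c \<and>
      (\<exists>T. two_opt_output c T0 T) \<and>
      (\<forall>T. two_opt_output c T0 T \<longrightarrow> tour_length c T = sqrt (real n / 2) * opt_length n c)"
    using metric_tsp_grid_dist grid_two_opt_output_iff grid_identity_tour_length_tight grid_opt_length
    by (auto simp: Let_def is_tour_def atLeast0LessThan
        intro!: exI[of _ "grid_dist k"] exI[of _ "[0..<2 * k\<^sup>2]"])
qed

end
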